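(* For every $p\in(0,1]$ there exists $\alpha>0$ such that for every integer $n\ge1$: if an online algorithm for the $\mathrm{AND}$ instance with $n$ variables reveals at least one of the variables with probability at least $p$, then its expected cost is at least $\alpha\cdot n$.
   Context: The $\mathrm{AND}$ instance with $n$ variables: $f(x)=\bigwedge_{i=1}^n x_i$, input $x$ uniform on $\{0,1\}^n$, costs $(c_1,\dots,c_n)$ a uniformly random permutation of $\{1,\dots,n\}$. Online priced query model: the algorithm (possibly randomized) knows $f$ but not $x$ or $c$; it maintains investments $\theta$ (initially $0$), increasing one coordinate by a positive amount per step; $x_i$ is revealed once $\theta_i\ge c_i$; cost is $\|\theta\|_1$ at halting. Probabilities and expectations are over input, costs, and the algorithm's randomness. *)

theory Defs
  imports "HOL-Probability.Probability"
begin

text \<open>Online priced query model for the AND instance with n variables,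
  indexed 0..n-1.  A deterministic algorithm is a strategy mapping the history
  of its own actions and observations to its next action: None = halt,
  Some (i, d) = increase the investment theta_i by d (must have i < n, d > 0;
  an invalid action is treated as halting).  The observation after a step on
  variable i is Some (x i) if x_i is revealed (theta_i \<ge> c_i), else None.\<close>

type_synonym step = "(nat \<times> real) \<times> bool option"
type_synonym history = "step list"
type_synonym strategy = "history \<Rightarrow> (nat \<times> real) option"

definition invest :: "history \<Rightarrow> nat \<Rightarrow> real" where
  "invest h i = (\<Sum>s\<leftarrow>h. if fst (fst s) = i then snd (fst s) else 0)"

definition spent :: "history \<Rightarrow> real" where
  "spent h = (\<Sum>s\<leftarrow>h. snd (fst s))"

fun hist :: "nat \<Rightarrow> strategy \<Rightarrow> (nat \<Rightarrow> bool) \<Rightarrow> (nat \<Rightarrow> nat) \<Rightarrow> nat \<Rightarrow> history" where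
  "hist n A x c 0 = []"
| "hist n A x c (Suc k) =
     (let h = hist n A x c k in
      case A h of
        None \<Rightarrow> h
      | Some (i, d) \<Rightarrow>
          (if i < n \<and> 0 < d
           then h @ [((i, d), if real (c i) \<le> invest h i + d then Some (x i) else None)]
           else h))"

text \<open>Cost at halting = ||theta||_1 (infinite if the algorithm never halts and spends unboundedly).\<close>
definition run_cost :: "nat \<Rightarrow> strategy \<Rightarrow> (nat \<Rightarrow> bool) \<Rightarrow> (nat \<Rightarrow> nat) \<Rightarrow> ennreal" where
  "run_cost n A x c = (SUP k. ennreal (spent (hist n A x c k)))"

definition reveals :: "nat \<Rightarrow> strategy \<Rightarrow> (nat \<Rightarrow> bool) \<Rightarrow> (nat \<Rightarrow> nat) \<Rightarrow> bool" where
  "reveals n A x c = (\<exists>k. \<exists>i<n. real (c i) \<le> invest (hist n A x c k) i)"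

definition inputs :: "nat \<Rightarrow> (nat \<Rightarrow> bool) set" where
  "inputs n = {x. \<forall>i\<ge>n. x i = False}"

definition costs :: "nat \<Rightarrow> (nat \<Rightarrow> nat) set" where
  "costs n = {c. bij_betw c {..<n} {1..n} \<and> (\<forall>i\<ge>n. c i = 0)}"

definition random_algorithm :: "nat \<Rightarrow> strategy measure \<Rightarrow> bool" where
  "random_algorithm n M \<longleftrightarrow> prob_space M \<and>
     (\<forall>x\<in>inputs n. \<forall>c\<in>costs n.
        {A \<in> space M. reveals n A x c} \<in> sets M \<and>
        (\<lambda>A. run_cost n A x c) \<in> borel_measurable M)"

definition reveal_prob :: "nat \<Rightarrow> strategy measure \<Rightarrow> real" where
  "reveal_prob n M = (\<Sum>x\<in>inputs n. \<Sum>c\<in>costs n. measure M {A \<in> space M. reveals n A x c})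
                       / (real (card (inputs n)) * real (card (costs n)))"

definition expected_cost :: "nat \<Rightarrow> strategy measure \<Rightarrow> ennreal" where
  "expected_cost n M = (\<Sum>x\<in>inputs n. \<Sum>c\<in>costs n. \<integral>\<^sup>+ A. run_cost n A x c \<partial>M)
                       * ennreal (1 / (real (card (inputs n)) * real (card (costs n))))"

end

theory Submission
  imports Defs "HOL-Combinatorics.Transposition"
begin

(* Until it first reveals a variable, a deterministic strategy observes nothing, so its run
  coincides with the blind run it would make if nothing were ever revealed, and that run depends
  on neither x nor c. If the strategy reveals a variable while spending less than B, then some
  prefix of the blind run, with investments t_i summing to less than B, has t_i >= c_i for some i.
  As c_i is uniform on {1..n}, this happens for at most a fraction (sum_i t_i)/n < B/n of the cost
  vectors. So the algorithm spends at least B with probability at least p - B/n, and its expected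
  cost is at least B (p - B/n), which is p^2 n/4 for B = p n/2. *)

section \<open>The blind run\<close>

fun blind_hist :: "nat \<Rightarrow> strategy \<Rightarrow> nat \<Rightarrow> history" where
  "blind_hist n A 0 = []"
| "blind_hist n A (Suc k) =
     (let h = blind_hist n A k in
      case A h of
        None \<Rightarrow> h
      | Some (i, d) \<Rightarrow> (if i < n \<and> 0 < d then h @ [((i, d), None)] else h))"

definition valid_steps :: "nat \<Rightarrow> history \<Rightarrow> bool" where
  "valid_steps n h \<longleftrightarrow> (\<forall>s\<in>set h. fst (fst s) < n \<and> 0 < snd (fst s))"

lemma invest_append [simp]: "invest (h @ t) i = invest h i + invest t i"
  by (simp add: invest_def)

lemma invest_eq_if_actions_eq: "map fst h = map fst h' \<Longrightarrow> invest h i = invest h' i"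
proof -
  have "invest g i = (\<Sum>a\<leftarrow>map fst g. if fst a = i then snd a else 0)" for g
    by (simp add: invest_def comp_def)
  then show "map fst h = map fst h' \<Longrightarrow> invest h i = invest h' i" by metis
qed

lemma spent_eq_if_actions_eq: "map fst h = map fst h' \<Longrightarrow> spent h = spent h'"
proof -
  have "spent g = (\<Sum>a\<leftarrow>map fst g. snd a)" for g
    by (simp add: spent_def comp_def)
  then show "map fst h = map fst h' \<Longrightarrow> spent h = spent h'" by metis
qed

lemma invest_nonneg: "valid_steps n h \<Longrightarrow> 0 \<le> invest h i"
  unfolding invest_def valid_steps_def by (intro sum_list_nonneg) auto

lemma sum_invest_eq_spent: "valid_steps n h \<Longrightarrow> (\<Sum>i<n. invest h i) = spent h"
proof (induction h)
  case Nil
  then show ?case by (simp add: invest_def spent_def)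
next
  case (Cons s h)
  then have "valid_steps n h" "fst (fst s) < n" by (auto simp: valid_steps_def)
  with Cons.IH show ?case by (simp add: invest_def spent_def sum.distrib)
qed

lemma blind_hist_extends:
  "k \<le> k' \<Longrightarrow> \<exists>t. blind_hist n A k' = blind_hist n A k @ t \<and> valid_steps n t"
proof (induction k' rule: dec_induct)
  case base
  show ?case by (auto simp: valid_steps_def)
next
  case (step m)
  then obtain t where "blind_hist n A m = blind_hist n A k @ t" "valid_steps n t" by blast
  moreover have "\<exists>u. blind_hist n A (Suc m) = blind_hist n A m @ u \<and> valid_steps n u"
    by (auto simp: Let_def valid_steps_def split: option.splits)
  ultimately show ?case by (force simp: valid_steps_def)
qed

lemma valid_steps_blind_hist: "valid_steps n (blind_hist n A k)"
  using blind_hist_extends[of 0 k n A] by auto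

lemma invest_blind_hist_mono: "k \<le> k' \<Longrightarrow> invest (blind_hist n A k) i \<le> invest (blind_hist n A k') i"
  using blind_hist_extends[of k k' n A] invest_nonneg by fastforce

lemma hist_eq_blind_hist:
  assumes "\<forall>j\<le>k. \<forall>i<n. invest (hist n A x c j) i < real (c i)"
  shows "hist n A x c k = blind_hist n A k"
  using assms
proof (induction k)
  case 0
  show ?case by simp
next
  case (Suc k)
  then have IH: "hist n A x c k = blind_hist n A k" by auto
  show ?case
  proof (cases "A (blind_hist n A k)")
    case (Some a)
    obtain i d where a: "a = (i, d)" by fastforce
    have "i < n \<and> 0 < d \<Longrightarrow> \<not> real (c i) \<le> invest (blind_hist n A k) i + d"
      using Suc.prems[rule_format, of "Suc k" i] IH Some a by (simp add: Let_def invest_def)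
    then show ?thesis using IH Some a by (simp add: Let_def)
  qed (use IH in \<open>simp add: Let_def\<close>)
qed

lemma actions_hist_Suc_eq:
  "hist n A x c k = blind_hist n A k \<Longrightarrow> map fst (hist n A x c (Suc k)) = map fst (blind_hist n A (Suc k))"
  by (auto simp: Let_def split: option.splits)

lemma spent_hist_le_run_cost: "ennreal (spent (hist n A x c k)) \<le> run_cost n A x c"
  unfolding run_cost_def by (rule SUP_upper) auto

lemma costs_range: "c \<in> costs n \<Longrightarrow> i < n \<Longrightarrow> c i \<in> {1..n}"
  unfolding costs_def bij_betw_def by auto

lemma cheap_reveal_on_blind_hist:
  assumes "c \<in> costs n" and "reveals n A x c" and "run_cost n A x c < ennreal B"
  shows "\<exists>k. spent (blind_hist n A k) < B \<and> (\<exists>i<n. real (c i) \<le> invest (blind_hist n A k) i)"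
proof -
  define P where "P k \<longleftrightarrow> (\<exists>i<n. real (c i) \<le> invest (hist n A x c k) i)" for k
  define k0 where "k0 = (LEAST k. P k)"
  have "P k0"
    using assms(2) LeastI_ex[of P] unfolding reveals_def P_def k0_def by blast
  have not_P: "\<not> P j" if "j < k0" for j
    using not_less_Least that unfolding k0_def by blast
  have "\<not> P 0"
    using costs_range[OF assms(1)] by (force simp: P_def invest_def)
  with \<open>P k0\<close> obtain m where m: "k0 = Suc m"
    by (cases k0) auto
  have "hist n A x c m = blind_hist n A m"
    using not_P m by (intro hist_eq_blind_hist) (auto simp: P_def not_le)
  then have actions: "map fst (hist n A x c k0) = map fst (blind_hist n A k0)"
    using m actions_hist_Suc_eq by simp
  have "ennreal (spent (hist n A x c k0)) < ennreal B"
    using spent_hist_le_run_cost assms(3) by (rule le_less_trans)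
  then have "spent (blind_hist n A k0) < B"
    using spent_eq_if_actions_eq[OF actions] ennreal_less_iff by (metis ennreal_leI not_le)
  moreover have "\<exists>i<n. real (c i) \<le> invest (blind_hist n A k0) i"
    using \<open>P k0\<close> invest_eq_if_actions_eq[OF actions] by (auto simp: P_def)
  ultimately show ?thesis by blast
qed

section \<open>Uniformly random costs\<close>

lemma finite_costs: "finite (costs n)"
proof (rule finite_subset)
  show "costs n \<subseteq> {c. \<forall>i. (i \<in> {..<n} \<longrightarrow> c i \<in> {1..n}) \<and> (i \<notin> {..<n} \<longrightarrow> c i = 0)}"
    using costs_range by (auto simp: costs_def)
qed (intro finite_set_of_finite_funs; simp)
lemma Suc_in_costs: "(\<lambda>i. if i < n then Suc i else 0) \<in> costs n"
proof -
  have "bij_betw Suc {..<n} {1..n}"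
    by (simp add: image_Suc_lessThan)
  then show ?thesis
    unfolding costs_def by (auto intro: bij_betw_cong[THEN iffD1])
qed

lemma card_costs_pos: "0 < card (costs n)"
  using finite_costs Suc_in_costs card_gt_0_iff by blast

lemma card_inputs_pos: "0 < card (inputs n)"
proof -
  have "inputs n = {x. \<forall>i. (i \<in> {..<n} \<longrightarrow> x i \<in> UNIV) \<and> (i \<notin> {..<n} \<longrightarrow> x i = False)}"
    by (auto simp: inputs_def)
  then have "finite (inputs n)"
    using finite_set_of_finite_funs[of "{..<n}" UNIV False] by simp
  moreover have "(\<lambda>_. False) \<in> inputs n"
    by (simp add: inputs_def)
  ultimately show ?thesis
    using card_gt_0_iff by blast
qed

lemma transpose_comp_in_costs:
  assumes "c \<in> costs n" and "j \<in> {1..n}" and "j' \<in> {1..n}"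
  shows "Transposition.transpose j j' \<circ> c \<in> costs n"
proof -
  have "bij_betw (Transposition.transpose j j' \<circ> c) {..<n} {1..n}"
    using assms by (intro bij_betw_trans[of c _ "{1..n}"]) (auto simp: costs_def)
  moreover have "(Transposition.transpose j j' \<circ> c) i = 0" if "n \<le> i" for i
    using assms that by (auto simp: costs_def)
  ultimately show ?thesis
    by (simp add: costs_def)
qed

lemma card_costs_value_eq:
  assumes "j \<in> {1..n}" and "j' \<in> {1..n}"
  shows "card {c\<in>costs n. c i = j} = card {c\<in>costs n. c i = j'}"
proof (rule bij_betw_same_card)
  show "bij_betw ((\<circ>) (Transposition.transpose j j')) {c\<in>costs n. c i = j} {c\<in>costs n. c i = j'}"
  proof (rule bij_betw_byWitness[where f' = "(\<circ>) (Transposition.transpose j j')"])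
    show "(\<circ>) (Transposition.transpose j j') ` {c \<in> costs n. c i = j} \<subseteq> {c \<in> costs n. c i = j'}"
      using transpose_comp_in_costs[OF _ assms] by auto
    show "(\<circ>) (Transposition.transpose j j') ` {c \<in> costs n. c i = j'} \<subseteq> {c \<in> costs n. c i = j}"
      using transpose_comp_in_costs[OF _ assms] by auto
  qed (simp_all add: comp_assoc[symmetric])
qed

lemma card_costs_value_in:
  assumes "i < n" and "J \<subseteq> {1..n}"
  shows "n * card {c\<in>costs n. c i \<in> J} = card J * card (costs n)"
proof -
  have count: "card {c\<in>costs n. c i \<in> K} = card K * card {c\<in>costs n. c i = 1}"
    if "K \<subseteq> {1..n}" for K
  proof -
    have "{c\<in>costs n. c i \<in> K} = (\<Union>j\<in>K. {c\<in>costs n. c i = j})"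
      by auto
    also have "card \<dots> = (\<Sum>j\<in>K. card {c\<in>costs n. c i = j})"
      using that finite_costs by (intro card_UN_disjoint) (auto intro: finite_subset)
    also have "\<dots> = (\<Sum>j\<in>K. card {c\<in>costs n. c i = 1})"
      using that assms(1) by (intro sum.cong refl card_costs_value_eq) auto
    finally show ?thesis
      by simp
  qed
  have "{c\<in>costs n. c i \<in> {1..n}} = costs n"
    using costs_range assms(1) by blast
  then have "card (costs n) = n * card {c\<in>costs n. c i = 1}"
    using count[of "{1..n}"] by simp
  then show ?thesis
    using count[OF assms(2)] by simp
qed

lemma card_le_threshold: "0 \<le> t \<Longrightarrow> real (card {j\<in>{1..n::nat}. real j \<le> t}) \<le> t"
proof -
  assume "0 \<le> t"
  then have "{j\<in>{1..n}. real j \<le> t} \<subseteq> {1..nat \<lfloor>t\<rfloor>}"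
    by (auto simp: le_nat_floor)
  then have "card {j\<in>{1..n}. real j \<le> t} \<le> nat \<lfloor>t\<rfloor>"
    using card_mono[of "{1..nat \<lfloor>t\<rfloor>}"] by fastforce
  with \<open>0 \<le> t\<close> show ?thesis
    by linarith
qed

lemma card_costs_le_threshold:
  assumes "i < n" and "0 \<le> t"
  shows "real (card {c\<in>costs n. real (c i) \<le> t}) \<le> t * card (costs n) / n"
proof -
  let ?J = "{j\<in>{1..n}. real j \<le> t}"
  have same: "{c\<in>costs n. real (c i) \<le> t} = {c\<in>costs n. c i \<in> ?J}"
    using costs_range assms(1) by auto
  have "n * card {c\<in>costs n. real (c i) \<le> t} = card ?J * card (costs n)"
    unfolding same using assms(1) by (rule card_costs_value_in) auto
  then have "real n * card {c\<in>costs n. real (c i) \<le> t} = real (card ?J) * card (costs n)"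
    by (simp flip: of_nat_mult)
  also have "\<dots> \<le> t * card (costs n)"
    by (rule mult_right_mono[OF card_le_threshold[OF assms(2)]]) simp
  finally show ?thesis
    using assms(1) by (simp add: pos_le_divide_eq mult.commute)
qed

lemma card_costs_below_some_le:
  assumes "\<And>i. 0 \<le> t i"
  shows "real (card (\<Union>i<n. {c\<in>costs n. real (c i) \<le> t i})) \<le> (\<Sum>i<n. t i) * card (costs n) / n"
proof -
  have "card (\<Union>i<n. {c\<in>costs n. real (c i) \<le> t i}) \<le> (\<Sum>i<n. card {c\<in>costs n. real (c i) \<le> t i})"
    by (rule card_UN_le) simp
  then have "real (card (\<Union>i<n. {c\<in>costs n. real (c i) \<le> t i}))
               \<le> (\<Sum>i<n. real (card {c\<in>costs n. real (c i) \<le> t i}))"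
    unfolding of_nat_sum[symmetric] of_nat_le_iff .
  also have "\<dots> \<le> (\<Sum>i<n. t i * card (costs n) / n)"
    using card_costs_le_threshold assms by (intro sum_mono) simp
  finally show ?thesis
    by (simp add: sum_divide_distrib sum_distrib_right)
qed

lemma cheap_reveals_covered:
  assumes "0 \<le> B"
  obtains t where "\<And>i. 0 \<le> t i" and "(\<Sum>i<n. t i) \<le> B"
    and "{c\<in>costs n. reveals n A x c \<and> run_cost n A x c < ennreal B}
           \<subseteq> (\<Union>i<n. {c\<in>costs n. real (c i) \<le> t i})"
proof (cases "{c\<in>costs n. reveals n A x c \<and> run_cost n A x c < ennreal B} = {}")
  case True
  show ?thesis
    by (rule that[of "\<lambda>_. 0"]) (use True assms in auto)
next
  case False
  define S where "S = {c\<in>costs n. reveals n A x c \<and> run_cost n A x c < ennreal B}"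
  have "\<exists>k. spent (blind_hist n A k) < B \<and> (\<exists>i<n. real (c i) \<le> invest (blind_hist n A k) i)"
    if "c \<in> S" for c
    using cheap_reveal_on_blind_hist that by (auto simp: S_def)
  then obtain k where k_spent: "\<And>c. c \<in> S \<Longrightarrow> spent (blind_hist n A (k c)) < B"
    and k_reveals: "\<And>c. c \<in> S \<Longrightarrow> \<exists>i<n. real (c i) \<le> invest (blind_hist n A (k c)) i"
    by metis
  have "finite S"
    using finite_costs by (simp add: S_def)
  define K where "K = Max (k ` S)"
  have "K \<in> k ` S"
    unfolding K_def using \<open>finite S\<close> False by (simp add: S_def)
  then have "(\<Sum>i<n. invest (blind_hist n A K) i) \<le> B"
    using k_spent by (auto simp: sum_invest_eq_spent[OF valid_steps_blind_hist] less_imp_le)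
  moreover have "S \<subseteq> (\<Union>i<n. {c\<in>costs n. real (c i) \<le> invest (blind_hist n A K) i})"
  proof
    fix c assume "c \<in> S"
    then obtain i where "i < n" and "real (c i) \<le> invest (blind_hist n A (k c)) i"
      using k_reveals by blast
    moreover have "invest (blind_hist n A (k c)) i \<le> invest (blind_hist n A K) i"
      unfolding K_def using \<open>finite S\<close> \<open>c \<in> S\<close> by (intro invest_blind_hist_mono) simp
    ultimately show "c \<in> (\<Union>i<n. {c\<in>costs n. real (c i) \<le> invest (blind_hist n A K) i})"
      using \<open>c \<in> S\<close> by (force simp: S_def)
  qed
  ultimately show ?thesis
    using that[of "invest (blind_hist n A K)"] invest_nonneg[OF valid_steps_blind_hist]
    unfolding S_def by blast
qed

lemma card_cheap_reveals_le:
  assumes "0 \<le> B"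
  shows "real (card {c\<in>costs n. reveals n A x c \<and> run_cost n A x c < ennreal B})
           \<le> B * card (costs n) / n"
proof -
  obtain t where t_nonneg: "\<And>i. 0 \<le> t i" and t_sum: "(\<Sum>i<n. t i) \<le> B"
    and covered: "{c\<in>costs n. reveals n A x c \<and> run_cost n A x c < ennreal B}
                    \<subseteq> (\<Union>i<n. {c\<in>costs n. real (c i) \<le> t i})"
    using cheap_reveals_covered[OF assms] by blast
  have "card {c\<in>costs n. reveals n A x c \<and> run_cost n A x c < ennreal B}
          \<le> card (\<Union>i<n. {c\<in>costs n. real (c i) \<le> t i})"
    using covered finite_costs by (intro card_mono) auto
  then have "real (card {c\<in>costs n. reveals n A x c \<and> run_cost n A x c < ennreal B})
               \<le> (\<Sum>i<n. t i) * card (costs n) / n"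
    using card_costs_below_some_le[of t n, OF t_nonneg] by linarith
  also have "\<dots> \<le> B * card (costs n) / n"
    using t_sum by (intro divide_right_mono mult_right_mono) auto
  finally show ?thesis .
qed

section \<open>The expected cost\<close>

lemma ennreal_diff_le_of_le_add: "ennreal a \<le> E + ennreal b \<Longrightarrow> 0 \<le> b \<Longrightarrow> ennreal (a - b) \<le> E"
  by (simp add: ennreal_minus_le_iff add.commute flip: ennreal_minus)

lemma emeasure_le_nn_integral_add_emeasure_less:
  fixes f :: "'a \<Rightarrow> ennreal"
  assumes "R \<in> sets M" and [measurable]: "f \<in> borel_measurable M"
  shows "B * emeasure M R \<le> (\<integral>\<^sup>+\<omega>. f \<omega> \<partial>M) + B * emeasure M {\<omega>\<in>R. f \<omega> < B}"
proof -
  have "{\<omega>\<in>R. f \<omega> < B} = {\<omega>\<in>space M. \<omega> \<in> R \<and> f \<omega> < B}"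
    using sets.sets_into_space[OF assms(1)] by auto
  also have "\<dots> \<in> sets M"
    using assms(1) by measurable
  finally have D: "{\<omega>\<in>R. f \<omega> < B} \<in> sets M" .
  have "B * emeasure M R = (\<integral>\<^sup>+\<omega>. B * indicator R \<omega> \<partial>M)"
    using assms(1) by (simp add: nn_integral_cmult_indicator)
  also have "\<dots> \<le> (\<integral>\<^sup>+\<omega>. f \<omega> + B * indicator {\<omega>\<in>R. f \<omega> < B} \<omega> \<partial>M)"
    by (intro nn_integral_mono) (auto simp: indicator_def not_less add_increasing2)
  also have "\<dots> = (\<integral>\<^sup>+\<omega>. f \<omega> \<partial>M) + (\<integral>\<^sup>+\<omega>. B * indicator {\<omega>\<in>R. f \<omega> < B} \<omega> \<partial>M)"
    using D by (intro nn_integral_add) auto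
  also have "(\<integral>\<^sup>+\<omega>. B * indicator {\<omega>\<in>R. f \<omega> < B} \<omega> \<partial>M) = B * emeasure M {\<omega>\<in>R. f \<omega> < B}"
    using D by (simp add: nn_integral_cmult_indicator)
  finally show ?thesis .
qed

lemma
  assumes "random_algorithm n M" and "x \<in> inputs n" and "c \<in> costs n"
  shows sets_reveals: "{A\<in>space M. reveals n A x c} \<in> sets M"
    and borel_measurable_run_cost: "(\<lambda>A. run_cost n A x c) \<in> borel_measurable M"
  using assms by (auto simp: random_algorithm_def)

lemma sets_cheap_reveals:
  assumes "random_algorithm n M" and "x \<in> inputs n" and "c \<in> costs n"
  shows "{A\<in>space M. reveals n A x c \<and> run_cost n A x c < B} \<in> sets M"
proof -
  have [measurable]: "Measurable.pred M (\<lambda>A. reveals n A x c)"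
    using sets_reveals[OF assms] by (simp add: pred_def)
  note borel_measurable_run_cost[OF assms, measurable]
  show ?thesis
    by measurable
qed

lemma sum_emeasure_cheap_reveals_le:
  assumes "random_algorithm n M" and "x \<in> inputs n" and "0 \<le> B"
  shows "(\<Sum>c\<in>costs n. emeasure M {A\<in>space M. reveals n A x c \<and> run_cost n A x c < ennreal B})
           \<le> ennreal (B * card (costs n) / n)"
proof -
  interpret prob_space M
    using assms(1) by (simp add: random_algorithm_def)
  let ?D = "\<lambda>c. {A\<in>space M. reveals n A x c \<and> run_cost n A x c < ennreal B}"
  have D: "?D c \<in> sets M" if "c \<in> costs n" for c
    using sets_cheap_reveals[OF assms(1,2) that] .
  have "(\<Sum>c\<in>costs n. emeasure M (?D c)) = (\<integral>\<^sup>+A. (\<Sum>c\<in>costs n. indicator (?D c) A) \<partial>M)"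
    using D by (simp add: nn_integral_sum)
  also have "\<dots> \<le> (\<integral>\<^sup>+A. ennreal (B * card (costs n) / n) \<partial>M)"
  proof (intro nn_integral_mono)
    fix A assume "A \<in> space M"
    then have "(\<Sum>c\<in>costs n. indicator (?D c) A :: ennreal)
                 = of_nat (card {c\<in>costs n. reveals n A x c \<and> run_cost n A x c < ennreal B})"
      by (simp add: indicator_def sum.If_cases finite_costs Int_def)
    also have "\<dots> \<le> ennreal (B * card (costs n) / n)"
      using card_cheap_reveals_le[OF assms(3)] by (simp add: ennreal_of_nat_eq_real_of_nat ennreal_leI)
    finally show "(\<Sum>c\<in>costs n. indicator (?D c) A) \<le> ennreal (B * card (costs n) / n)" .
  qed
  also have "\<dots> = ennreal (B * card (costs n) / n)"
    by (simp add: emeasure_space_1)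
  finally show ?thesis .
qed

lemma sum_emeasure_reveals:
  assumes "random_algorithm n M"
  shows "(\<Sum>x\<in>inputs n. \<Sum>c\<in>costs n. emeasure M {A\<in>space M. reveals n A x c})
           = ennreal (reveal_prob n M * card (inputs n) * card (costs n))"
proof -
  interpret prob_space M
    using assms by (simp add: random_algorithm_def)
  have "(\<Sum>x\<in>inputs n. \<Sum>c\<in>costs n. emeasure M {A\<in>space M. reveals n A x c})
          = ennreal (\<Sum>x\<in>inputs n. \<Sum>c\<in>costs n. measure M {A\<in>space M. reveals n A x c})"
    by (simp add: emeasure_eq_measure sum_nonneg)
  also have "(\<Sum>x\<in>inputs n. \<Sum>c\<in>costs n. measure M {A\<in>space M. reveals n A x c})
               = reveal_prob n M * card (inputs n) * card (costs n)"
    using card_inputs_pos[of n] card_costs_pos[of n] by (simp add: reveal_prob_def)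
  finally show ?thesis .
qed

lemma expected_cost_ge:
  assumes RA: "random_algorithm n M" and "0 \<le> B"
  shows "ennreal (B * (reveal_prob n M - B / n)) \<le> expected_cost n M"
proof -
  define NX where "NX = real (card (inputs n))"
  define NC where "NC = real (card (costs n))"
  define E where "E = (\<Sum>x\<in>inputs n. \<Sum>c\<in>costs n. \<integral>\<^sup>+A. run_cost n A x c \<partial>M)"
  have "0 < NX" "0 < NC"
    using card_inputs_pos card_costs_pos by (simp_all add: NX_def NC_def)
  let ?R = "\<lambda>x c. {A\<in>space M. reveals n A x c}"
  let ?D = "\<lambda>x c. {A\<in>space M. reveals n A x c \<and> run_cost n A x c < ennreal B}"
  have markov: "ennreal B * emeasure M (?R x c)
                  \<le> (\<integral>\<^sup>+A. run_cost n A x c \<partial>M) + ennreal B * emeasure M (?D x c)"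
    if "x \<in> inputs n" "c \<in> costs n" for x c
    using emeasure_le_nn_integral_add_emeasure_less[OF sets_reveals[OF RA that]
        borel_measurable_run_cost[OF RA that], of "ennreal B"]
    by (simp add: conj_assoc)
  have "(\<Sum>x\<in>inputs n. \<Sum>c\<in>costs n. emeasure M (?R x c)) = ennreal (reveal_prob n M * NX * NC)"
    unfolding NX_def NC_def using RA by (rule sum_emeasure_reveals)
  then have "ennreal (B * reveal_prob n M * NX * NC)
               = ennreal B * (\<Sum>x\<in>inputs n. \<Sum>c\<in>costs n. emeasure M (?R x c))"
    using \<open>0 \<le> B\<close> by (simp add: ennreal_mult' mult.assoc)
  also have "\<dots> \<le> (\<Sum>x\<in>inputs n. \<Sum>c\<in>costs n.
                        (\<integral>\<^sup>+A. run_cost n A x c \<partial>M) + ennreal B * emeasure M (?D x c))"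
    unfolding sum_distrib_left by (intro sum_mono markov)
  also have "\<dots> = E + ennreal B * (\<Sum>x\<in>inputs n. \<Sum>c\<in>costs n. emeasure M (?D x c))"
    by (simp add: E_def sum.distrib sum_distrib_left)
  also have "\<dots> \<le> E + ennreal B * (\<Sum>x\<in>inputs n. ennreal (B * NC / n))"
    unfolding NC_def using RA \<open>0 \<le> B\<close>
    by (intro add_left_mono mult_left_mono sum_mono sum_emeasure_cheap_reveals_le) auto
  also have "\<dots> = E + ennreal (B * B * NX * NC / n)"
    using \<open>0 \<le> B\<close> \<open>0 < NC\<close>
    by (simp add: NX_def ennreal_of_nat_eq_real_of_nat ennreal_mult' flip: ennreal_mult'')
  finally have "ennreal (B * reveal_prob n M * NX * NC) \<le> E + ennreal (B * B * NX * NC / n)" .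
  then have "ennreal (B * reveal_prob n M * NX * NC - B * B * NX * NC / n) \<le> E"
    using \<open>0 \<le> B\<close> \<open>0 < NX\<close> \<open>0 < NC\<close> by (intro ennreal_diff_le_of_le_add) auto
  then have "ennreal (B * (reveal_prob n M - B / n) * NX * NC) \<le> E"
    by (simp add: algebra_simps)
  then have "ennreal (B * (reveal_prob n M - B / n) * NX * NC) * ennreal (1 / (NX * NC))
               \<le> expected_cost n M"
    unfolding expected_cost_def E_def NX_def NC_def by (rule mult_right_mono) simp
  then show ?thesis
    using \<open>0 < NX\<close> \<open>0 < NC\<close> by (simp flip: ennreal_mult'')
qed

lemma expected_cost_ge_quadratic:
  assumes "random_algorithm n M" and "0 < p" and "p \<le> reveal_prob n M"
  shows "ennreal (p\<^sup>2 / 4 * n) \<le> expected_cost n M"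
proof -
  have "p\<^sup>2 / 4 * n \<le> p * n / 2 * (reveal_prob n M - p * n / 2 / n)"
    using assms(2,3) by (cases "n = 0") (simp_all add: power2_eq_square field_simps)
  also have "ennreal \<dots> \<le> expected_cost n M"
    using assms by (intro expected_cost_ge) auto
  finally show ?thesis
    by (simp add: ennreal_leI order_trans)
qed

theorem mainTheorem15:
  shows "\<forall>p::real. 0 < p \<and> p \<le> 1 \<longrightarrow>
           (\<exists>\<alpha>::real. \<alpha> > 0 \<and>
              (\<forall>n::nat. n \<ge> 1 \<longrightarrow>
                 (\<forall>M :: strategy measure. random_algorithm n M \<and> reveal_prob n M \<ge> p \<longrightarrow>
                    expected_cost n M \<ge> ennreal (\<alpha> * real n))))"
proof (intro allI impI)
  fix p :: real
  assume "0 < p \<and> p \<le> 1"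
  then show "\<exists>\<alpha>>0. \<forall>n\<ge>1. \<forall>M. random_algorithm n M \<and> p \<le> reveal_prob n M
               \<longrightarrow> ennreal (\<alpha> * real n) \<le> expected_cost n M"
    using expected_cost_ge_quadratic by (intro exI[of _ "p\<^sup>2 / 4"]) auto
qed

end
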